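(* There is $\varepsilon>0$ such that the following holds: there exist constants $L$ with $0<L<1$ and $C>0$ such that for all $x$ with $|x|\le\rho^2+\varepsilon$, all $u$ with $|u|\le1$ and all non-negative integers $k$, $$|w_k(x,u)|\le C|u-1|\cdot|x|\cdot L^k.$$
   Context: Let $y(x)=\sum_{n\ge1}y_nx^n$, $y_n$ the number of unlabelled rooted trees with $n$ vertices; it satisfies $y(x)=x\exp(\sum_{i\ge1}y(x^i)/i)$ and has radius of convergence $\rho\in(0,1)$ with $y(\rho)=1$. Define $y_0(x,u)=uy(x)$ and $y_{k+1}(x,u)=x\exp\left(\sum_{i\ge1}y_k(x^i,u^i)/i\right)$ for $k\ge0$ (generating function of such trees with $u$ marking vertices at distance $k$ from the root), and $w_k(x,u)=y_k(x,u)-y(x)$. *)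

theory Defs
  imports "HOL-Analysis.Analysis" "HOL-Library.Multiset"
begin

text \<open>Unlabelled rooted trees: a root together with a multiset of subtrees.
  Equality of such terms is exactly isomorphism of unlabelled rooted trees.\<close>
datatype rtree = Node "rtree multiset"

primrec nverts :: "rtree \<Rightarrow> nat" where
  "nverts (Node M) = Suc (sum_mset (image_mset nverts M))"

definition ycount :: "nat \<Rightarrow> nat" where
  "ycount n = card {t. nverts t = n}"

definition rho :: real where
  "rho = real_of_ereal (conv_radius (\<lambda>n. real (ycount n)))"

definition ygf :: "complex \<Rightarrow> complex" where
  "ygf x = (\<Sum>n. of_nat (ycount n) * x ^ n)"

primrec yk :: "nat \<Rightarrow> complex \<Rightarrow> complex \<Rightarrow> complex" where
  "yk 0 x u = u * ygf x"
| "yk (Suc k) x u = x * exp (\<Sum>i. yk k (x ^ Suc i) (u ^ Suc i) / of_nat (Suc i))"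

definition wk :: "nat \<Rightarrow> complex \<Rightarrow> complex \<Rightarrow> complex" where
  "wk k x u = yk k x u - ygf x"

end

theory Submission
  imports Defs "HOL-Complex_Analysis.Weierstrass_Factorization"
begin

text \<open>A tree is a root together with a forest (multiset) of subtrees, so \<open>y(x) = x A(x)\<close> where
  \<open>A(x) = \<Sum> a\<^sub>m x\<^sup>m\<close> counts forests by size. Counting forests with one marked occurrence of a
  subtree gives Euler's recurrence \<open>m a\<^sub>m = \<Sum>\<^sub>k c\<^sub>k a\<^sub>m\<^sub>-\<^sub>k\<close> with \<open>c\<^sub>k = \<Sum>\<^sub>d\<^sub>|\<^sub>k d y\<^sub>d\<close>, i.e.
  \<open>A' = H' A\<close> for \<open>H(x) = \<Sum>\<^sub>i\<^sub>\<ge>\<^sub>1 y(x\<^sup>i)/i\<close>; hence \<open>A = exp H\<close> and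
  \<open>y(x) = x exp H(x)\<close> on \<open>|x| < \<rho>\<close>.

  At real \<open>0 < t < \<rho>\<close> the functional equation gives \<open>y(t) \<ge> t e y(t)\<close>, so \<open>\<rho> \<le> 1/e\<close> and
  \<open>\<rho>\<^sup>2 < 3/20 < 1/4 \<le> \<rho>\<close>, the lower bound coming from \<open>a\<^sub>m\<^sub>+\<^sub>1 \<le> \<Sum> a\<^sub>i a\<^sub>m\<^sub>-\<^sub>i\<close>; the same
  inequality gives \<open>|y(x)| \<le> 1.23 |x|\<close> for \<open>|x| \<le> 3/20\<close>. Finally
  \<open>w\<^sub>k\<^sub>+\<^sub>1(x,u) = y(x) (exp D - 1)\<close> with \<open>D = \<Sum>\<^sub>i w\<^sub>k(x\<^sup>i,u\<^sup>i)/i\<close>, and \<open>|u\<^sup>i - 1| \<le> i |u - 1|\<close>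
  makes \<open>D\<close> small enough for the bound to halve at every step; so
  \<open>\<epsilon> = 3/20 - \<rho>\<^sup>2\<close>, \<open>L = 1/2\<close> and \<open>C = 1.23\<close> work.\<close>

section \<open>Counting trees and forests\<close>

definition forest_size :: "rtree multiset \<Rightarrow> nat" where
  "forest_size M = sum_mset (image_mset nverts M)"

definition trees_of_size :: "nat \<Rightarrow> rtree set" where
  "trees_of_size n = {t. nverts t = n}"

definition forests_of_size :: "nat \<Rightarrow> rtree multiset set" where
  "forests_of_size m = {M. forest_size M = m}"

definition nforests :: "nat \<Rightarrow> nat" where
  "nforests m = card (forests_of_size m)"

lemma nverts_pos: "0 < nverts t"
  by (cases t) auto

lemma forest_size_empty [simp]: "forest_size {#} = 0"
  by (simp add: forest_size_def)

lemma forest_size_add_mset [simp]: "forest_size (add_mset t M) = nverts t + forest_size M"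
  by (simp add: forest_size_def)

lemma forest_size_union [simp]: "forest_size (M + N) = forest_size M + forest_size N"
  by (simp add: forest_size_def)

lemma forest_size_replicate_mset [simp]: "forest_size (replicate_mset j t) = j * nverts t"
  by (simp add: forest_size_def)

lemma forest_size_eq_sum_count: "forest_size M = (\<Sum>t\<in>set_mset M. count M t * nverts t)"
proof (induction M)
  case (add x M)
  show ?case
  proof (cases "x \<in># M")
    case True
    have "(\<Sum>t\<in>set_mset M. count (add_mset x M) t * nverts t) =
          (\<Sum>t\<in>set_mset M. count M t * nverts t + (if t = x then nverts t else 0))"
      by (intro sum.cong) auto
    thus ?thesis using True add by (simp add: sum.distrib insert_absorb)
  next
    case False
    have "(\<Sum>t\<in>set_mset M. count (add_mset x M) t * nverts t) = (\<Sum>t\<in>set_mset M. count M t * nverts t)"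
      using False by (intro sum.cong) auto
    thus ?thesis using False add by (simp add: not_in_iff)
  qed
qed simp

lemma trees_of_size_0: "trees_of_size 0 = {}"
  using nverts_pos by (force simp: trees_of_size_def)

lemma trees_of_size_Suc: "trees_of_size (Suc m) = Node ` forests_of_size m"
proof -
  have "t \<in> Node ` forests_of_size m" if "nverts t = Suc m" for t
    using that by (cases t) (auto simp: forests_of_size_def forest_size_def)
  thus ?thesis by (auto simp: trees_of_size_def forests_of_size_def forest_size_def)
qed

lemma forests_of_size_0: "forests_of_size 0 = {{#}}"
proof -
  have "forest_size M = 0 \<longleftrightarrow> M = {#}" for M
    by (cases M) (auto simp: nverts_pos)
  thus ?thesis by (auto simp: forests_of_size_def)
qed

lemma forests_of_size_Suc_subset:
  "forests_of_size (Suc m) \<subseteq>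
     (\<lambda>(t, N). add_mset t N) ` (\<Union>i\<le>m. trees_of_size (Suc i) \<times> forests_of_size (m - i))"
proof
  fix M assume "M \<in> forests_of_size (Suc m)"
  hence M: "forest_size M = Suc m" by (simp add: forests_of_size_def)
  hence "M \<noteq> {#}" by auto
  then obtain t N where MN: "M = add_mset t N" by (metis multiset_cases)
  obtain i where i: "nverts t = Suc i" using nverts_pos[of t] not0_implies_Suc by blast
  with M MN have "i \<le> m" "t \<in> trees_of_size (Suc i)" "N \<in> forests_of_size (m - i)"
    by (auto simp: trees_of_size_def forests_of_size_def)
  hence "(t, N) \<in> (\<Union>i\<le>m. trees_of_size (Suc i) \<times> forests_of_size (m - i))"
    by blast
  thus "M \<in> (\<lambda>(t, N). add_mset t N) ` (\<Union>i\<le>m. trees_of_size (Suc i) \<times> forests_of_size (m - i))"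
    using MN by (auto intro: rev_image_eqI)
qed

lemma finite_forests_of_size: "finite (forests_of_size m)"
proof (induction m rule: less_induct)
  case (less m)
  show ?case
  proof (cases m)
    case 0
    thus ?thesis by (simp add: forests_of_size_0)
  next
    case (Suc n)
    have "finite (\<Union>i\<le>n. trees_of_size (Suc i) \<times> forests_of_size (n - i))"
      using less Suc by (auto simp: trees_of_size_Suc)
    thus ?thesis
      using forests_of_size_Suc_subset[of n] Suc by (blast intro: finite_subset)
  qed
qed

lemma finite_trees_of_size: "finite (trees_of_size n)"
  by (cases n) (auto simp: trees_of_size_0 trees_of_size_Suc finite_forests_of_size)

lemma card_trees_of_size_Suc: "card (trees_of_size (Suc m)) = nforests m"
  unfolding trees_of_size_Suc nforests_def by (rule card_image) (auto simp: inj_on_def)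

lemma ycount_eq_card: "ycount n = card (trees_of_size n)"
  by (simp add: ycount_def trees_of_size_def)

lemma ycount_0 [simp]: "ycount 0 = 0"
  by (simp add: ycount_eq_card trees_of_size_0)

lemma ycount_Suc: "ycount (Suc m) = nforests m"
  by (simp add: ycount_eq_card card_trees_of_size_Suc)

lemma nforests_0 [simp]: "nforests 0 = 1"
  by (simp add: nforests_def forests_of_size_0)

lemma nforests_pos: "0 < nforests m"
proof (induction m)
  case (Suc m)
  then obtain M where "M \<in> forests_of_size m"
    unfolding nforests_def by (metis card.empty ex_in_conv less_irrefl)
  hence "{#Node M#} \<in> forests_of_size (Suc m)"
    by (simp add: forests_of_size_def forest_size_def)
  hence "forests_of_size (Suc m) \<noteq> {}"
    by blast
  thus ?case
    unfolding nforests_def using finite_forests_of_size by (simp add: card_gt_0_iff)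
qed simp

lemma ycount_pos: "0 < n \<Longrightarrow> 0 < ycount n"
  by (cases n) (auto simp: ycount_Suc nforests_pos)

lemma nforests_Suc_le_convolution:
  "nforests (Suc m) \<le> (\<Sum>i\<le>m. nforests i * nforests (m - i))"
proof -
  let ?U = "\<Union>i\<le>m. trees_of_size (Suc i) \<times> forests_of_size (m - i)"
  have fin: "finite ?U"
    by (auto intro!: finite_cartesian_product finite_trees_of_size finite_forests_of_size)
  have "nforests (Suc m) \<le> card ((\<lambda>(t, N). add_mset t N) ` ?U)"
    unfolding nforests_def
    by (rule card_mono[OF finite_imageI[OF fin] forests_of_size_Suc_subset])
  also have "\<dots> \<le> card ?U"
    by (rule card_image_le[OF fin])
  also have "\<dots> \<le> (\<Sum>i\<le>m. card (trees_of_size (Suc i) \<times> forests_of_size (m - i)))"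
    by (rule card_UN_le) simp
  also have "\<dots> = (\<Sum>i\<le>m. nforests i * nforests (m - i))"
    by (simp add: card_cartesian_product card_trees_of_size_Suc nforests_def)
  finally show ?thesis .
qed

lemma sum_convolution_le_square:
  fixes b :: "nat \<Rightarrow> real"
  assumes "\<And>i. 0 \<le> b i"
  shows "(\<Sum>m\<le>N. \<Sum>i\<le>m. b i * b (m - i)) \<le> (\<Sum>i\<le>N. b i)\<^sup>2"
proof -
  have "(\<Sum>m\<le>N. \<Sum>i\<le>m. b i * b (m - i)) = (\<Sum>(i, j)\<in>{(i, j). i + j \<le> N}. b i * b j)"
    by (rule sum.triangle_reindex_eq[symmetric])
  also have "\<dots> \<le> (\<Sum>(i, j)\<in>{..N} \<times> {..N}. b i * b j)"
    by (rule sum_mono2) (auto intro: mult_nonneg_nonneg assms)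
  also have "\<dots> = (\<Sum>i\<le>N. b i)\<^sup>2"
    by (simp add: power2_eq_square sum_product sum.cartesian_product)
  finally show ?thesis .
qed

lemma nforests_Suc_power_le_convolution:
  fixes t :: real
  assumes t: "0 \<le> t"
  shows "real (nforests (Suc m)) * t ^ Suc m \<le>
           t * (\<Sum>i\<le>m. (real (nforests i) * t ^ i) * (real (nforests (m - i)) * t ^ (m - i)))"
proof -
  have "real (nforests (Suc m)) \<le> (\<Sum>i\<le>m. real (nforests i) * real (nforests (m - i)))"
    unfolding of_nat_mult[symmetric] of_nat_sum[symmetric] of_nat_le_iff
    by (rule nforests_Suc_le_convolution)
  hence "real (nforests (Suc m)) * t ^ Suc m \<le>
         (\<Sum>i\<le>m. real (nforests i) * real (nforests (m - i))) * t ^ Suc m"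
    using t by (simp add: mult_right_mono)
  also have "\<dots> = t * (\<Sum>i\<le>m. (real (nforests i) * t ^ i) * (real (nforests (m - i)) * t ^ (m - i)))"
    unfolding sum_distrib_left sum_distrib_right
  proof (rule sum.cong)
    fix i assume "i \<in> {..m}"
    hence "t ^ Suc m = t * (t ^ i * t ^ (m - i))"
      by (simp add: power_add[symmetric])
    thus "real (nforests i) * real (nforests (m - i)) * t ^ Suc m =
          t * ((real (nforests i) * t ^ i) * (real (nforests (m - i)) * t ^ (m - i)))"
      by simp
  qed simp
  finally show ?thesis .
qed

text \<open>\<open>a\<^sub>m\<^sub>+\<^sub>1 \<le> \<Sum> a\<^sub>i a\<^sub>m\<^sub>-\<^sub>i\<close> says \<open>A \<le> 1 + t A\<^sup>2\<close> coefficientwise, so the partial sums of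
  \<open>A(t)\<close> can never pass a \<open>p\<close> with \<open>1 + t p\<^sup>2 \<le> p\<close>.\<close>

lemma nforests_partial_sum_le:
  fixes t p :: real
  assumes t: "0 \<le> t" and p: "1 + t * p\<^sup>2 \<le> p"
  shows "(\<Sum>m\<le>N. real (nforests m) * t ^ m) \<le> p"
proof (induction N)
  case 0
  have "0 \<le> t * p\<^sup>2" using t by simp
  thus ?case using p by simp
next
  case (Suc N)
  define b where "b i = real (nforests i) * t ^ i" for i
  have b: "0 \<le> b i" for i
    using t by (simp add: b_def)
  have "(\<Sum>m\<le>N. real (nforests (Suc m)) * t ^ Suc m) \<le> (\<Sum>m\<le>N. t * (\<Sum>i\<le>m. b i * b (m - i)))"
    unfolding b_def by (rule sum_mono) (rule nforests_Suc_power_le_convolution[OF t])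
  also have "\<dots> = t * (\<Sum>m\<le>N. \<Sum>i\<le>m. b i * b (m - i))"
    by (simp only: sum_distrib_left)
  also have "\<dots> \<le> t * (\<Sum>i\<le>N. b i)\<^sup>2"
    using sum_convolution_le_square[OF b] t by (rule mult_left_mono)
  also have "\<dots> \<le> t * p\<^sup>2"
    using Suc.IH b t unfolding b_def[symmetric] by (intro mult_left_mono power_mono sum_nonneg) auto
  finally have "(\<Sum>m\<le>Suc N. real (nforests m) * t ^ m) \<le> 1 + t * p\<^sup>2"
    by (subst sum.atMost_Suc_shift) simp
  thus ?case using p by linarith
qed

lemma
  fixes t p :: real
  assumes t: "0 \<le> t" and p: "1 + t * p\<^sup>2 \<le> p"
  shows summable_nforests_series: "summable (\<lambda>m. real (nforests m) * t ^ m)"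
    and suminf_nforests_series_le: "(\<Sum>m. real (nforests m) * t ^ m) \<le> p"
proof -
  have partial: "(\<Sum>m<N. real (nforests m) * t ^ m) \<le> p" for N
  proof (cases N)
    case 0
    thus ?thesis using nforests_partial_sum_le[OF t p, of 0] t by simp
  next
    case (Suc n)
    thus ?thesis using nforests_partial_sum_le[OF t p, of n] by (simp add: lessThan_Suc_atMost)
  qed
  show "summable (\<lambda>m. real (nforests m) * t ^ m)"
    using t partial by (intro summableI_nonneg_bounded) auto
  thus "(\<Sum>m. real (nforests m) * t ^ m) \<le> p"
    using partial by (intro suminf_le_const) auto
qed

lemma ycount_le: "real (ycount n) \<le> 2 * 4 ^ n"
proof (cases n)
  case (Suc m)
  have "real (nforests m) * (1/4) ^ m \<le> (\<Sum>i\<le>m. real (nforests i) * (1/4) ^ i)"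
    by (rule member_le_sum) auto
  also have "\<dots> \<le> 2"
    by (rule nforests_partial_sum_le) auto
  finally show ?thesis
    using Suc by (simp add: ycount_Suc field_simps power_divide)
qed simp

section \<open>Euler's recurrence\<close>

definition divisor_pairs :: "nat \<Rightarrow> (nat \<times> nat) set" where
  "divisor_pairs k = {(i, d). d * Suc i = k \<and> 0 < d}"

definition euler_coeff :: "nat \<Rightarrow> nat" where
  "euler_coeff k = (\<Sum>(i, d)\<in>divisor_pairs k. d * ycount d)"

lemma finite_divisor_pairs: "finite (divisor_pairs k)"
proof (rule finite_subset)
  show "divisor_pairs k \<subseteq> {..k} \<times> {..k}"
  proof
    fix p assume "p \<in> divisor_pairs k"
    then obtain i d where p: "p = (i, d)" "d * Suc i = k" "0 < d"
      by (auto simp: divisor_pairs_def)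
    moreover have "d \<le> d * Suc i" "Suc i \<le> d * Suc i"
      using p(3) mult_le_mono1[of 1 d "Suc i"] by simp_all
    ultimately show "p \<in> {..k} \<times> {..k}"
      by auto
  qed
qed simp

lemma divisor_pairs_0: "divisor_pairs 0 = {}"
  by (auto simp: divisor_pairs_def)

text \<open>Forests of size \<open>m\<close> with one occurrence of one of their trees marked
  (the \<open>j\<close>-th copy of \<open>t\<close>), and forests split into \<open>i + 1\<close> copies of a tree of size
  \<open>d\<close> plus a remainder. Deleting the first \<open>j\<close> copies of the marked tree is a bijection
  between them; counting vertices of the marked tree on both sides gives Euler's recurrence.\<close>

definition marked_forests :: "nat \<Rightarrow> (rtree multiset \<times> rtree \<times> nat) set" where
  "marked_forests m = (SIGMA N:forests_of_size m. SIGMA t:set_mset N. {1..count N t})"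

definition split_forests :: "nat \<Rightarrow> ((nat \<times> nat) \<times> rtree \<times> rtree multiset) set" where
  "split_forests m = (SIGMA (i, d):(\<Union>k\<in>{1..m}. divisor_pairs k).
                        trees_of_size d \<times> forests_of_size (m - d * Suc i))"

lemma sum_marked_forests: "(\<Sum>x\<in>marked_forests m. nverts (fst (snd x))) = m * nforests m"
proof -
  have marks: "(\<Sum>y\<in>(SIGMA t:set_mset N. {1..count N t}). nverts (fst y)) = forest_size N" for N
  proof -
    have "(\<Sum>y\<in>(SIGMA t:set_mset N. {1..count N t}). nverts (fst y)) =
          (\<Sum>t\<in>set_mset N. \<Sum>j\<in>{1..count N t}. nverts t)"
      by (subst sum.Sigma) (auto simp: case_prod_beta)
    thus ?thesis
      by (simp add: forest_size_eq_sum_count)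
  qed
  have "(\<Sum>x\<in>marked_forests m. nverts (fst (snd x))) =
        (\<Sum>N\<in>forests_of_size m. \<Sum>y\<in>(SIGMA t:set_mset N. {1..count N t}). nverts (fst y))"
    unfolding marked_forests_def
    by (subst sum.Sigma) (simp_all add: finite_forests_of_size case_prod_beta)
  also have "\<dots> = (\<Sum>N\<in>forests_of_size m. m)"
    by (rule sum.cong[OF refl], subst marks) (simp add: forests_of_size_def)
  also have "\<dots> = m * nforests m"
    by (simp add: nforests_def)
  finally show ?thesis .
qed

lemma sum_marked_forests_eq_split:
  "(\<Sum>x\<in>marked_forests m. nverts (fst (snd x))) = (\<Sum>q\<in>split_forests m. snd (fst q))"
proof (rule sum.reindex_bij_witness
    [where i = "\<lambda>((i, d), t, N'). (N' + replicate_mset (Suc i) t, t, Suc i)"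
       and j = "\<lambda>(N, t, j). ((j - 1, nverts t), t, N - replicate_mset j t)"])
  fix q assume "q \<in> split_forests m"
  then obtain i d t N' where q: "q = ((i, d), t, N')" "d * Suc i \<le> m" "nverts t = d"
    "forest_size N' = m - d * Suc i"
    by (auto simp: split_forests_def divisor_pairs_def trees_of_size_def forests_of_size_def)
  show "(\<lambda>(N, t, j). ((j - 1, nverts t), t, N - replicate_mset j t))
          ((\<lambda>((i, d), t, N'). (N' + replicate_mset (Suc i) t, t, Suc i)) q) = q"
    using q by simp
  show "(\<lambda>((i, d), t, N'). (N' + replicate_mset (Suc i) t, t, Suc i)) q \<in> marked_forests m"
    using q by (auto simp: marked_forests_def forests_of_size_def mult.commute)
next
  fix x assume "x \<in> marked_forests m"
  then obtain N t j where x: "x = (N, t, j)" "forest_size N = m" "t \<in># N" "1 \<le> j" "j \<le> count N t"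
    by (auto simp: marked_forests_def forests_of_size_def)
  then obtain i where j: "j = Suc i"
    using not0_implies_Suc by fastforce
  have "replicate_mset j t \<subseteq># N"
    using x(5) by (simp only: count_le_replicate_mset_subset_eq)
  hence N: "N = (N - replicate_mset j t) + replicate_mset j t"
    by (rule subset_mset.diff_add[symmetric])
  hence "forest_size (N - replicate_mset j t) + nverts t * Suc i = m"
    using x(2) j by (metis forest_size_union forest_size_replicate_mset mult.commute)
  hence "nverts t * Suc i \<le> m" "forest_size (N - replicate_mset j t) = m - nverts t * Suc i"
    by linarith+
  thus "(\<lambda>(N, t, j). ((j - 1, nverts t), t, N - replicate_mset j t)) x \<in> split_forests m"
    using x(1) j nverts_pos[of t]
    by (auto simp: split_forests_def divisor_pairs_def trees_of_size_def forests_of_size_def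
             simp del: replicate_mset_Suc)
  show "(\<lambda>((i, d), t, N'). (N' + replicate_mset (Suc i) t, t, Suc i))
          ((\<lambda>(N, t, j). ((j - 1, nverts t), t, N - replicate_mset j t)) x) = x"
    using x(1) j N by (simp del: replicate_mset_Suc)
  show "snd (fst ((\<lambda>(N, t, j). ((j - 1, nverts t), t, N - replicate_mset j t)) x)) = nverts (fst (snd x))"
    using x(1) by simp
qed

lemma sum_split_forests:
  "(\<Sum>q\<in>split_forests m. snd (fst q)) = (\<Sum>k\<in>{1..m}. euler_coeff k * nforests (m - k))"
proof -
  have fin: "finite (trees_of_size d \<times> forests_of_size n)" for d n
    by (intro finite_cartesian_product finite_trees_of_size finite_forests_of_size)
  let ?D = "\<Union>k\<in>{1..m}. divisor_pairs k"
  have "(\<Sum>q\<in>split_forests m. snd (fst q)) =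
        (\<Sum>p\<in>?D. \<Sum>y\<in>(\<lambda>(i, d). trees_of_size d \<times> forests_of_size (m - d * Suc i)) p. snd p)"
    unfolding split_forests_def
    by (subst sum.Sigma) (auto simp: split_def fin finite_divisor_pairs)
  also have "\<dots> = (\<Sum>(i, d)\<in>?D. d * ycount d * nforests (m - d * Suc i))"
    by (intro sum.cong) (auto simp: card_cartesian_product ycount_eq_card nforests_def)
  also have "\<dots> = (\<Sum>k\<in>{1..m}. \<Sum>(i, d)\<in>divisor_pairs k. d * ycount d * nforests (m - d * Suc i))"
    by (rule sum.UNION_disjoint) (auto simp: finite_divisor_pairs, auto simp: divisor_pairs_def)
  also have "\<dots> = (\<Sum>k\<in>{1..m}. euler_coeff k * nforests (m - k))"
    by (intro sum.cong refl)
       (auto simp: euler_coeff_def sum_distrib_right divisor_pairs_def intro!: sum.cong)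
  finally show ?thesis .
qed

lemma nforests_euler_recurrence:
  "m * nforests m = (\<Sum>k\<in>{1..m}. euler_coeff k * nforests (m - k))"
  using sum_marked_forests[of m] sum_marked_forests_eq_split[of m] sum_split_forests[of m]
  by simp

section \<open>Convergence of the tree series\<close>

lemma conv_radius_ycount_ge: "ereal (1/4) \<le> conv_radius (\<lambda>n. real (ycount n))"
proof (rule conv_radius_geI_ex')
  fix r :: real assume r: "0 < r" "ereal r < ereal (1/4)"
  have "summable (\<lambda>n. real (ycount n) * r ^ n)"
  proof (rule summable_comparison_test')
    show "summable (\<lambda>n. 2 * (4 * r) ^ n)"
      using r by (intro summable_mult summable_geometric) auto
    fix n
    have "real (ycount n) * r ^ n \<le> 2 * 4 ^ n * r ^ n"
      using ycount_le[of n] r by (intro mult_right_mono) auto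
    thus "norm (real (ycount n) * r ^ n) \<le> 2 * (4 * r) ^ n"
      using r by (simp add: power_mult_distrib)
  qed
  thus "summable (\<lambda>n. real (ycount n) * of_real r ^ n)"
    by simp
qed

lemma conv_radius_ycount_le: "conv_radius (\<lambda>n. real (ycount n)) \<le> 1"
proof -
  have "\<not> summable (\<lambda>n. norm (real (ycount n) * 1 ^ n))"
  proof
    assume "summable (\<lambda>n. norm (real (ycount n) * 1 ^ n))"
    hence "(\<lambda>n. norm (real (ycount n) * 1 ^ n)) \<longlonglongrightarrow> 0"
      by (rule summable_LIMSEQ_zero)
    hence "eventually (\<lambda>n. norm (real (ycount n) * 1 ^ n) < 1) sequentially"
      by (rule order_tendstoD) simp
    then obtain N where "\<And>n. N \<le> n \<Longrightarrow> real (ycount n) < 1"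
      by (auto simp: eventually_sequentially)
    thus False
      using ycount_pos[of "Suc N"] by force
  qed
  hence "conv_radius (\<lambda>n. real (ycount n)) \<le> ereal (norm (1::real))"
    by (rule conv_radius_leI)
  thus ?thesis
    by (simp add: one_ereal_def)
qed

lemma rho_bounds:
  shows conv_radius_ycount: "conv_radius (\<lambda>n. real (ycount n)) = ereal rho"
    and rho_ge: "1/4 \<le> rho"
    and rho_le_1: "rho \<le> 1"
proof -
  obtain c where c: "conv_radius (\<lambda>n. real (ycount n)) = ereal c"
    using conv_radius_ycount_ge conv_radius_ycount_le
    by (cases "conv_radius (\<lambda>n. real (ycount n))") auto
  thus "conv_radius (\<lambda>n. real (ycount n)) = ereal rho"
    by (simp add: rho_def)
  show "1/4 \<le> rho" "rho \<le> 1"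
    using c conv_radius_ycount_ge conv_radius_ycount_le by (simp_all add: rho_def)
qed

lemma summable_norm_ygf_series:
  fixes x :: complex
  assumes "cmod x < rho"
  shows "summable (\<lambda>n. norm (of_nat (ycount n) * x ^ n))"
proof (rule abs_summable_in_conv_radius)
  have "conv_radius (\<lambda>n. of_nat (ycount n) :: complex) = conv_radius (\<lambda>n. real (ycount n))"
    by (rule conv_radius_cong) simp
  thus "ereal (norm x) < conv_radius (\<lambda>n. of_nat (ycount n) :: complex)"
    using assms conv_radius_ycount by simp
qed

lemma ygf_sums: "cmod x < rho \<Longrightarrow> (\<lambda>n. of_nat (ycount n) * x ^ n) sums ygf x"
  unfolding ygf_def by (rule summable_sums[OF summable_norm_cancel[OF summable_norm_ygf_series]])

definition yreal :: "real \<Rightarrow> real" where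
  "yreal t = (\<Sum>n. real (ycount n) * t ^ n)"

lemma yreal_sums: "0 \<le> t \<Longrightarrow> t < rho \<Longrightarrow> (\<lambda>n. real (ycount n) * t ^ n) sums yreal t"
  using summable_norm_ygf_series[of "of_real t"] unfolding yreal_def
  by (intro summable_sums) (simp add: norm_mult norm_power)

lemma ygf_of_real: "0 \<le> t \<Longrightarrow> t < rho \<Longrightarrow> ygf (of_real t) = of_real (yreal t)"
  using sums_of_real[OF yreal_sums, where 'a = complex] ygf_sums[of "of_real t"]
  by (simp add: sums_unique2)

section \<open>The functional equation\<close>

text \<open>\<open>H(x) = \<Sum>\<^sub>i\<^sub>\<ge>\<^sub>1 y(x\<^sup>i)/i = \<Sum>\<^sub>i\<^sub>,\<^sub>d y\<^sub>d x\<^sup>d\<^sup>i/i\<close> as a double series; the pair \<open>(i, d)\<close>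
  stands for the term with \<open>i + 1\<close> in place of \<open>i\<close>.\<close>

definition log_term :: "complex \<Rightarrow> nat \<times> nat \<Rightarrow> complex" where
  "log_term x p = of_nat (ycount (snd p)) * x ^ (snd p * Suc (fst p)) / of_nat (Suc (fst p))"

lemma norm_log_term_le:
  assumes "cmod x \<le> 1"
  shows "norm (log_term x (i, d)) \<le> cmod x ^ i * (real (ycount d) * cmod x ^ d)"
proof (cases "d = 0")
  case False
  have "d + i \<le> d * Suc i"
    using False by (simp add: algebra_simps)
  hence "cmod x ^ (d * Suc i) \<le> cmod x ^ (d + i)"
    using assms by (intro power_decreasing) auto
  hence "real (ycount d) * cmod x ^ (d * Suc i) / real (Suc i) \<le> real (ycount d) * cmod x ^ (d + i) / 1"
    by (intro frac_le mult_left_mono) auto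
  moreover have "norm (log_term x (i, d)) = real (ycount d) * cmod x ^ (d * Suc i) / real (Suc i)"
    unfolding log_term_def norm_divide norm_mult norm_power norm_of_nat by simp
  ultimately show ?thesis
    by (simp add: power_add algebra_simps)
qed (simp add: log_term_def)

lemma log_term_abs_summable:
  assumes "cmod x < rho"
  shows "(\<lambda>p. norm (log_term x p)) summable_on UNIV"
proof -
  let ?r = "cmod x"
  have r1: "?r < 1"
    using assms rho_le_1 by simp
  define g where "g p = ?r ^ fst p * (real (ycount (snd p)) * ?r ^ snd p)" for p :: "nat \<times> nat"
  have Y: "0 \<le> yreal ?r"
    using yreal_sums[of ?r] assms by (auto simp: sums_iff yreal_def intro!: suminf_nonneg)
  have "g summable_on Sigma UNIV (\<lambda>_. UNIV)"
  proof (rule summable_on_SigmaI)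
    fix i :: nat
    have "(\<lambda>d. ?r ^ i * (real (ycount d) * ?r ^ d)) sums (?r ^ i * yreal ?r)"
      using assms by (intro sums_mult yreal_sums) auto
    thus "((\<lambda>d. g (i, d)) has_sum (?r ^ i * yreal ?r)) UNIV"
      by (intro sums_nonneg_imp_has_sum) (auto simp: g_def)
  next
    show "(\<lambda>i. ?r ^ i * yreal ?r) summable_on UNIV"
      using r1 Y by (subst summable_on_UNIV_nonneg_real_iff) (auto intro!: summable_mult2)
  qed (simp add: g_def)
  hence "g summable_on UNIV"
    by simp
  thus ?thesis
  proof (rule Infinite_Sum.abs_summable_on_comparison_test')
    fix p :: "nat \<times> nat"
    show "norm (log_term x p) \<le> g p"
      using norm_log_term_le[of x "fst p" "snd p"] r1 by (simp add: g_def)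
  qed
qed

lemma log_term_summable: "cmod x < rho \<Longrightarrow> log_term x summable_on UNIV"
  by (rule abs_summable_summable) (rule log_term_abs_summable)

lemma log_term_row_has_sum:
  assumes x: "cmod x < rho"
  shows "((\<lambda>d. log_term x (i, d)) has_sum (ygf (x ^ Suc i) / of_nat (Suc i))) UNIV"
proof (rule norm_summable_imp_has_sum)
  have r1: "cmod x \<le> 1"
    using x rho_le_1 by simp
  have "summable (\<lambda>d. cmod x ^ i * (real (ycount d) * cmod x ^ d))"
    using yreal_sums[of "cmod x"] x by (intro summable_mult) (auto simp: sums_iff)
  thus "summable (\<lambda>d. norm (log_term x (i, d)))"
    by (rule summable_comparison_test') (use norm_log_term_le[OF r1] in auto)
  have "cmod x ^ i \<le> 1"
    using r1 by (simp add: power_le_one)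
  hence "cmod x * cmod x ^ i \<le> cmod x"
    by (simp add: mult_left_le)
  hence "cmod (x ^ Suc i) \<le> cmod x"
    by (simp add: norm_power norm_mult)
  hence "(\<lambda>d. of_nat (ycount d) * (x ^ Suc i) ^ d / of_nat (Suc i)) sums (ygf (x ^ Suc i) / of_nat (Suc i))"
    using x by (intro sums_divide ygf_sums) simp
  moreover have "(x ^ Suc i) ^ d = x ^ (d * Suc i)" for d
    by (metis power_mult mult.commute)
  ultimately show "(\<lambda>d. log_term x (i, d)) sums (ygf (x ^ Suc i) / of_nat (Suc i))"
    by (simp only: log_term_def fst_conv snd_conv)
qed

lemma log_series_sums:
  assumes x: "cmod x < rho"
  shows "(\<lambda>i. ygf (x ^ Suc i) / of_nat (Suc i)) sums infsum (log_term x) UNIV"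
proof -
  have "(log_term x has_sum infsum (log_term x) UNIV) (Sigma UNIV (\<lambda>_. UNIV))"
    using log_term_summable[OF x] by simp
  hence "((\<lambda>i. ygf (x ^ Suc i) / of_nat (Suc i)) has_sum infsum (log_term x) UNIV) UNIV"
    by (rule has_sum_SigmaD) (rule log_term_row_has_sum[OF x])
  thus ?thesis
    by (rule has_sum_imp_sums)
qed

definition log_coeff :: "nat \<Rightarrow> complex" where
  "log_coeff k = (\<Sum>(i, d)\<in>divisor_pairs k. of_nat (ycount d) / of_nat (Suc i))"

definition log_forest_fps :: "complex fps" where
  "log_forest_fps = Abs_fps log_coeff"

definition forest_fps :: "complex fps" where
  "forest_fps = Abs_fps (\<lambda>m. of_nat (nforests m))"

lemma log_coeff_sums:
  assumes x: "cmod x < rho"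
  shows "(\<lambda>k. log_coeff k * x ^ k) sums infsum (log_term x) UNIV"
proof -
  define pairs where "pairs k = {p :: nat \<times> nat. snd p * Suc (fst p) = k}" for k
  have "(log_term x has_sum infsum (log_term x) UNIV) UNIV"
    using log_term_summable[OF x] by simp
  moreover have "(log_term x has_sum infsum (log_term x) UNIV) UNIV \<longleftrightarrow>
      ((\<lambda>q. log_term x (snd q)) has_sum infsum (log_term x) UNIV) (Sigma UNIV pairs)"
    by (rule has_sum_reindex_bij_witness[where j = "\<lambda>p. (snd p * Suc (fst p), p)" and i = snd])
       (auto simp: pairs_def)
  ultimately have "((\<lambda>q. log_term x (snd q)) has_sum infsum (log_term x) UNIV) (Sigma UNIV pairs)"
    by simp
  hence "((\<lambda>k. log_coeff k * x ^ k) has_sum infsum (log_term x) UNIV) UNIV"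
  proof (rule has_sum_SigmaD)
    fix k :: nat
    have "(log_term x has_sum (log_coeff k * x ^ k)) (divisor_pairs k)"
    proof (rule has_sum_finiteI[OF finite_divisor_pairs])
      show "log_coeff k * x ^ k = sum (log_term x) (divisor_pairs k)"
        unfolding log_coeff_def sum_distrib_right
        by (intro sum.cong) (auto simp: divisor_pairs_def log_term_def)
    qed
    moreover have "(log_term x has_sum (log_coeff k * x ^ k)) (divisor_pairs k) \<longleftrightarrow>
        (log_term x has_sum (log_coeff k * x ^ k)) (pairs k)"
      by (rule has_sum_cong_neutral) (auto simp: divisor_pairs_def pairs_def log_term_def)
    ultimately show "((\<lambda>y. log_term x (snd (k, y))) has_sum (log_coeff k * x ^ k)) (pairs k)"
      by simp
  qed
  thus ?thesis
    by (rule has_sum_imp_sums)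
qed

lemma fps_conv_radius_log_forest_fps: "ereal rho \<le> fps_conv_radius log_forest_fps"
  unfolding fps_conv_radius_def log_forest_fps_def
proof (rule conv_radius_geI_ex)
  fix r :: real assume "0 < r" "ereal r < ereal rho"
  thus "\<exists>z::complex. norm z = r \<and> summable (\<lambda>n. fps_nth (Abs_fps log_coeff) n * z ^ n)"
    using log_coeff_sums[of "of_real r"] by (intro exI[of _ "of_real r"]) (auto simp: sums_iff)
qed

lemma eval_log_forest_fps:
  assumes "cmod x < rho"
  shows "summable (\<lambda>i. ygf (x ^ Suc i) / of_nat (Suc i))"
    and "eval_fps log_forest_fps x = (\<Sum>i. ygf (x ^ Suc i) / of_nat (Suc i))"
  using log_coeff_sums[OF assms] log_series_sums[OF assms]
  by (auto simp: eval_fps_def log_forest_fps_def sums_iff)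

lemma fps_conv_radius_forest_fps: "fps_conv_radius forest_fps = ereal rho"
proof -
  have "fps_conv_radius forest_fps = conv_radius (\<lambda>n. of_nat (ycount (n + 1)) :: complex)"
    by (simp add: fps_conv_radius_def forest_fps_def ycount_Suc)
  also have "\<dots> = conv_radius (\<lambda>n. of_nat (ycount n) :: complex)"
    by (rule conv_radius_shift)
  also have "\<dots> = conv_radius (\<lambda>n. real (ycount n))"
    by (rule conv_radius_cong) simp
  finally show ?thesis
    by (simp add: conv_radius_ycount)
qed

lemma of_nat_euler_coeff: "of_nat (euler_coeff k) = of_nat k * log_coeff k"
proof -
  have "of_nat k * log_coeff k = (\<Sum>(i, d)\<in>divisor_pairs k. of_nat k * (of_nat (ycount d) / of_nat (Suc i)))"
    by (simp add: log_coeff_def sum_distrib_left case_prod_beta)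
  also have "\<dots> = (\<Sum>(i, d)\<in>divisor_pairs k. of_nat (d * ycount d))"
  proof (intro sum.cong refl)
    fix p assume "p \<in> divisor_pairs k"
    then obtain i d where p: "p = (i, d)" "k = d * Suc i"
      by (auto simp: divisor_pairs_def)
    have "(of_nat (Suc i) :: complex) \<noteq> 0"
      by (simp del: of_nat_Suc)
    thus "(case p of (i, d) \<Rightarrow> of_nat k * (of_nat (ycount d) / of_nat (Suc i))) =
          (case p of (i, d) \<Rightarrow> (of_nat (d * ycount d) :: complex))"
      using p by (simp del: of_nat_Suc add: field_simps) (simp add: algebra_simps)
  qed
  also have "\<dots> = of_nat (euler_coeff k)"
    by (simp add: euler_coeff_def case_prod_beta)
  finally show ?thesis ..
qed

lemma fps_deriv_forest_fps: "fps_deriv forest_fps = fps_deriv log_forest_fps * forest_fps"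
proof (rule fps_ext)
  fix m
  have "fps_nth (fps_deriv forest_fps) m = of_nat (Suc m * nforests (Suc m))"
    by (simp add: forest_fps_def algebra_simps)
  also have "Suc m * nforests (Suc m) = (\<Sum>k\<in>{1..Suc m}. euler_coeff k * nforests (Suc m - k))"
    by (rule nforests_euler_recurrence)
  also have "\<dots> = (\<Sum>i\<in>{0..m}. euler_coeff (Suc i) * nforests (m - i))"
    by (simp only: One_nat_def sum.shift_bounds_cl_Suc_ivl) simp
  also have "(of_nat \<dots> :: complex) = (\<Sum>i=0..m. fps_nth (fps_deriv log_forest_fps) i * fps_nth forest_fps (m - i))"
    by (simp add: log_forest_fps_def forest_fps_def of_nat_euler_coeff del: of_nat_Suc)
  also have "\<dots> = fps_nth (fps_deriv log_forest_fps * forest_fps) m"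
    by (simp add: fps_mult_nth)
  finally show "fps_nth (fps_deriv forest_fps) m = fps_nth (fps_deriv log_forest_fps * forest_fps) m" .
qed

lemma eq_exp_if_deriv_eq:
  fixes f g g' :: "complex \<Rightarrow> complex"
  assumes f: "\<And>z. z \<in> ball 0 r \<Longrightarrow> (f has_field_derivative g' z * f z) (at z)"
    and g: "\<And>z. z \<in> ball 0 r \<Longrightarrow> (g has_field_derivative g' z) (at z)"
    and f0: "f 0 = exp (g 0)" and z: "z \<in> ball 0 r"
  shows "f z = exp (g z)"
proof -
  define F where "F z = f z * exp (- g z)" for z
  have "\<exists>c. \<forall>w\<in>ball 0 r. F w = c"
  proof (rule has_field_derivative_zero_constant)
    fix w :: complex assume w: "w \<in> ball 0 r"
    have "(F has_field_derivative g' w * f w * exp (- g w) + f w * (exp (- g w) * - g' w)) (at w)"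
      unfolding F_def using f[OF w] g[OF w] by (auto intro!: derivative_eq_intros)
    thus "(F has_field_derivative 0) (at w within ball 0 r)"
      by (auto intro: has_field_derivative_at_within simp: algebra_simps)
  qed simp
  then obtain c where c: "\<And>w. w \<in> ball 0 r \<Longrightarrow> F w = c"
    by blast
  have "0 \<in> ball 0 r"
    using z le_less_trans[OF norm_ge_zero, of z r] by simp
  hence "F z = F 0"
    using c c[OF z] by metis
  also have "F 0 = 1"
    by (simp add: F_def f0 exp_minus)
  finally have "F z = 1" .
  thus ?thesis
    by (simp add: F_def exp_minus field_simps)
qed

lemma eval_forest_fps_eq_exp:
  assumes "cmod x < rho"
  shows "eval_fps forest_fps x = exp (eval_fps log_forest_fps x)"
proof -
  have radius: "ereal (norm z) < fps_conv_radius forest_fps"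
    "ereal (norm z) < fps_conv_radius log_forest_fps"
    "ereal (norm z) < fps_conv_radius (fps_deriv log_forest_fps)"
    if "z \<in> ball 0 rho" for z
  proof -
    have "ereal (norm z) < ereal rho"
      using that by simp
    thus "ereal (norm z) < fps_conv_radius forest_fps"
      by (simp add: fps_conv_radius_forest_fps)
    show "ereal (norm z) < fps_conv_radius log_forest_fps"
      using \<open>ereal (norm z) < ereal rho\<close> fps_conv_radius_log_forest_fps by (rule less_le_trans)
    thus "ereal (norm z) < fps_conv_radius (fps_deriv log_forest_fps)"
      using fps_conv_radius_deriv by (rule less_le_trans)
  qed
  have "eval_fps (fps_deriv forest_fps) z = eval_fps (fps_deriv log_forest_fps) z * eval_fps forest_fps z"
    if "z \<in> ball 0 rho" for z
    using radius[OF that] by (simp add: fps_deriv_forest_fps eval_fps_mult)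
  hence deriv_forest: "(eval_fps forest_fps has_field_derivative
          eval_fps (fps_deriv log_forest_fps) z * eval_fps forest_fps z) (at z)"
    if "z \<in> ball 0 rho" for z
    using has_field_derivative_eval_fps[OF radius(1)[OF that]] that by simp
  have deriv_log: "(eval_fps log_forest_fps has_field_derivative eval_fps (fps_deriv log_forest_fps) z) (at z)"
    if "z \<in> ball 0 rho" for z
    using radius(2)[OF that] by (rule has_field_derivative_eval_fps)
  have at_0: "eval_fps forest_fps 0 = exp (eval_fps log_forest_fps 0)"
    by (simp add: eval_fps_at_0 forest_fps_def log_forest_fps_def log_coeff_def divisor_pairs_0)
  show ?thesis
    using eq_exp_if_deriv_eq[OF deriv_forest deriv_log at_0, where z = x] assms by simp
qed

lemma ygf_eq_eval_forest_fps:
  assumes "cmod x < rho"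
  shows "ygf x = x * eval_fps forest_fps x"
proof -
  have "(\<lambda>n. x * (fps_nth forest_fps n * x ^ n)) sums (x * eval_fps forest_fps x)"
    using assms fps_conv_radius_forest_fps by (intro sums_mult sums_eval_fps) simp
  hence "(\<lambda>n. of_nat (ycount (Suc n)) * x ^ Suc n) sums (x * eval_fps forest_fps x)"
    by (simp add: forest_fps_def ycount_Suc algebra_simps)
  hence "(\<lambda>n. of_nat (ycount n) * x ^ n) sums (x * eval_fps forest_fps x + of_nat (ycount 0) * x ^ 0)"
    by (rule sums_Suc)
  hence "(\<lambda>n. of_nat (ycount n) * x ^ n) sums (x * eval_fps forest_fps x)"
    by simp
  thus ?thesis
    using ygf_sums[OF assms] sums_unique2 by blast
qed

theorem ygf_functional_equation:
  assumes "cmod x < rho"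
  shows "ygf x = x * exp (\<Sum>i. ygf (x ^ Suc i) / of_nat (Suc i))"
  using ygf_eq_eval_forest_fps[OF assms] eval_forest_fps_eq_exp[OF assms] eval_log_forest_fps[OF assms]
  by simp

section \<open>An upper bound for \<open>\<rho>\<close>\<close>

lemma yreal_nonneg: "0 \<le> t \<Longrightarrow> t < rho \<Longrightarrow> 0 \<le> yreal t"
  using yreal_sums[of t] by (auto simp: sums_iff yreal_def intro!: suminf_nonneg)

lemma yreal_ge: "0 \<le> t \<Longrightarrow> t < rho \<Longrightarrow> t \<le> yreal t"
proof -
  assume t: "0 \<le> t" "t < rho"
  have "t \<le> real (ycount 1) * t"
    using ycount_pos[of 1] t by (simp add: mult_le_cancel_right1)
  also have "\<dots> = (\<Sum>n<2. real (ycount n) * t ^ n)"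
    by (simp add: eval_nat_numeral)
  also have "\<dots> \<le> yreal t"
    using yreal_sums[OF t] t unfolding yreal_def by (intro sum_le_suminf) (auto simp: sums_iff)
  finally show ?thesis .
qed

lemma power_Suc_less_rho:
  assumes "0 \<le> t" "t < rho"
  shows "t ^ Suc i < rho"
proof -
  have "t ^ i \<le> 1"
    using assms rho_le_1 by (simp add: power_le_one)
  hence "t ^ Suc i \<le> t"
    using assms by (simp add: mult_left_le)
  thus ?thesis
    using assms by simp
qed

lemma yreal_functional_equation:
  assumes t: "0 \<le> t" "t < rho"
  shows "summable (\<lambda>i. yreal (t ^ Suc i) / real (Suc i))"
    and "yreal t = t * exp (\<Sum>i. yreal (t ^ Suc i) / real (Suc i))"
proof -
  have powers: "0 \<le> t ^ Suc i" "t ^ Suc i < rho" for i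
    using t power_Suc_less_rho by auto
  have terms: "ygf (of_real t ^ Suc i) / of_nat (Suc i) = of_real (yreal (t ^ Suc i) / real (Suc i))" for i
    using ygf_of_real[OF powers(1,2)] by (simp flip: of_real_power del: of_nat_Suc)
  have "cmod (of_real t) < rho"
    using t by simp
  note fe = ygf_functional_equation[OF this] eval_log_forest_fps(1)[OF this]
  show sm: "summable (\<lambda>i. yreal (t ^ Suc i) / real (Suc i))"
    using fe(2) unfolding terms summable_complex_of_real .
  from fe(1)[unfolded terms ygf_of_real[OF t] suminf_of_real[OF sm, symmetric] exp_of_real
      of_real_mult[symmetric]]
  show "yreal t = t * exp (\<Sum>i. yreal (t ^ Suc i) / real (Suc i))"
    by (simp only: of_real_eq_iff)
qed

text \<open>For real \<open>0 < t < \<rho>\<close> the first term of \<open>H(t)\<close> is \<open>y(t)\<close>, so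
  \<open>y(t) \<ge> t exp (y(t)) \<ge> t e y(t)\<close> with \<open>y(t) > 0\<close>.\<close>

lemma mult_exp_1_le_if_less_rho:
  assumes t: "0 < t" "t < rho"
  shows "t * exp 1 \<le> 1"
proof -
  let ?H = "\<Sum>i. yreal (t ^ Suc i) / real (Suc i)"
  have "yreal t = (\<Sum>i<1. yreal (t ^ Suc i) / real (Suc i))"
    by simp
  also have "\<dots> \<le> ?H"
  proof (rule sum_le_suminf)
    show "summable (\<lambda>i. yreal (t ^ Suc i) / real (Suc i))"
      using t by (intro yreal_functional_equation) auto
    show "0 \<le> yreal (t ^ Suc i) / real (Suc i)" for i
      using t by (intro divide_nonneg_nonneg yreal_nonneg power_Suc_less_rho) auto
  qed simp
  finally have "exp (yreal t) \<le> exp ?H"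
    by simp
  hence upper: "t * exp (yreal t) \<le> yreal t"
    using yreal_functional_equation(2)[of t] t by (simp add: mult_left_mono)
  have "exp 1 * yreal t \<le> exp (yreal t)"
  proof -
    have "1 + (yreal t - 1) \<le> exp (yreal t - 1)"
      by (rule exp_ge_add_one_self)
    thus ?thesis
      by (simp add: exp_diff pos_le_divide_eq mult.commute)
  qed
  hence "(t * exp 1) * yreal t \<le> t * exp (yreal t)"
    using t by (simp add: mult.assoc mult_left_mono)
  hence "(t * exp 1) * yreal t \<le> 1 * yreal t"
    using upper by simp
  moreover have "0 < yreal t"
    using yreal_ge[of t] t by simp
  ultimately show ?thesis
    by (rule mult_right_le_imp_le)
qed

lemma rho_le_inverse_exp_1: "rho \<le> 1 / exp 1"
proof (rule dense_le_bounded)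
  show "0 < rho"
    using rho_ge by simp
  fix t assume "0 < t" "t < rho"
  thus "t \<le> 1 / exp 1"
    using mult_exp_1_le_if_less_rho by (simp add: field_simps)
qed

lemma rho_squared_less: "rho\<^sup>2 < 3/20"
proof -
  have "26/10 \<le> exp (1::real)"
    using e_approx_32 unfolding abs_le_iff by (simp add: inverse_eq_divide)
  hence "1 / exp 1 \<le> (10/26::real)"
    by (simp add: field_simps)
  hence "rho \<le> 10/26"
    using rho_le_inverse_exp_1 by linarith
  hence "rho\<^sup>2 \<le> (10/26)\<^sup>2"
    using rho_ge by (intro power_mono) auto
  thus ?thesis
    by (simp add: power2_eq_square)
qed

section \<open>Geometric decay of \<open>w\<^sub>k\<close>\<close>

lemma norm_power_sub_one_le:
  fixes u :: "'a :: real_normed_div_algebra"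
  assumes "norm u \<le> 1"
  shows "norm (u ^ n - 1) \<le> real n * norm (u - 1)"
proof (induction n)
  case (Suc n)
  have "norm (u ^ Suc n - 1) = norm (u * (u ^ n - 1) + (u - 1))"
    by (simp add: algebra_simps)
  also have "\<dots> \<le> norm u * norm (u ^ n - 1) + norm (u - 1)"
    by (metis norm_mult norm_triangle_ineq)
  also have "\<dots> \<le> 1 * (real n * norm (u - 1)) + norm (u - 1)"
    using assms Suc.IH by (intro add_right_mono mult_mono) auto
  finally show ?case
    by (simp add: algebra_simps)
qed simp

lemma norm_eval_forest_fps_le:
  assumes x: "cmod x \<le> 3/20"
  shows "cmod (eval_fps forest_fps x) \<le> 123/100"
proof -
  have p: "1 + cmod x * (123/100)\<^sup>2 \<le> 123/100"
    using x mult_right_mono[OF x, of "(123/100)\<^sup>2"] by (simp add: power2_eq_square)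
  have norms: "(\<lambda>m. norm (fps_nth forest_fps m * x ^ m)) = (\<lambda>m. real (nforests m) * cmod x ^ m)"
    by (simp add: forest_fps_def norm_mult norm_power)
  have "cmod (eval_fps forest_fps x) \<le> (\<Sum>m. norm (fps_nth forest_fps m * x ^ m))"
    unfolding eval_fps_def
    by (rule summable_norm) (simp add: norms summable_nforests_series[OF _ p])
  also have "\<dots> \<le> 123/100"
    unfolding norms by (rule suminf_nforests_series_le[OF _ p]) simp
  finally show ?thesis .
qed

lemma norm_ygf_le:
  assumes x: "cmod x \<le> 3/20"
  shows "cmod (ygf x) \<le> 123/100 * cmod x"
proof -
  have "cmod x < rho"
    using x rho_ge by simp
  hence "cmod (ygf x) = cmod x * cmod (eval_fps forest_fps x)"
    by (simp add: ygf_eq_eval_forest_fps norm_mult)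
  also have "\<dots> \<le> cmod x * (123/100)"
    using norm_eval_forest_fps_le[OF x] by (intro mult_left_mono) auto
  finally show ?thesis
    by (simp add: mult.commute)
qed

lemma
  fixes d :: "nat \<Rightarrow> 'a :: banach"
  assumes d: "\<And>i. norm (d i) \<le> A * r ^ Suc i" and r: "0 \<le> r" "r < 1"
  shows summable_if_norm_le_geometric: "summable d"
    and norm_suminf_le_geometric: "norm (\<Sum>i. d i) \<le> A * (r / (1 - r))"
proof -
  have geom: "(\<lambda>i. A * r ^ Suc i) sums (A * (r * (1 / (1 - r))))"
    unfolding power_Suc using r by (intro sums_mult geometric_sums) simp
  have norms: "summable (\<lambda>i. norm (d i))"
  proof (rule summable_comparison_test')
    show "summable (\<lambda>i. A * r ^ Suc i)"
      using geom by (simp add: sums_iff)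
  qed (use d in simp)
  thus "summable d"
    by (rule summable_norm_cancel)
  have "norm (\<Sum>i. d i) \<le> (\<Sum>i. norm (d i))"
    by (rule summable_norm[OF norms])
  also have "\<dots> \<le> (\<Sum>i. A * r ^ Suc i)"
    using geom d norms by (intro suminf_le) (auto simp: sums_iff)
  also have "\<dots> = A * (r / (1 - r))"
    using geom by (simp add: sums_iff)
  finally show "norm (\<Sum>i. d i) \<le> A * (r / (1 - r))" .
qed

lemma wk_0: "wk 0 x u = (u - 1) * ygf x"
  by (simp add: wk_def algebra_simps)

lemma wk_Suc:
  assumes x: "cmod x < rho"
    and summable: "summable (\<lambda>i. wk k (x ^ Suc i) (u ^ Suc i) / of_nat (Suc i))"
  shows "wk (Suc k) x u = ygf x * (exp (\<Sum>i. wk k (x ^ Suc i) (u ^ Suc i) / of_nat (Suc i)) - 1)"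
proof -
  let ?w = "\<lambda>i. wk k (x ^ Suc i) (u ^ Suc i) / of_nat (Suc i)"
  let ?y = "\<lambda>i. ygf (x ^ Suc i) / of_nat (Suc i)"
  have "(\<lambda>i. yk k (x ^ Suc i) (u ^ Suc i) / of_nat (Suc i)) = (\<lambda>i. ?y i + ?w i)"
    by (simp add: wk_def diff_divide_distrib)
  hence "yk (Suc k) x u = x * exp (suminf ?y + suminf ?w)"
    using suminf_add[OF eval_log_forest_fps(1)[OF x] summable] by simp
  also have "\<dots> = ygf x * exp (suminf ?w)"
    by (simp add: exp_add ygf_functional_equation[OF x])
  finally show ?thesis
    by (simp add: wk_def algebra_simps)
qed

lemma norm_wk_series_term_le:
  assumes IH: "\<And>x u. cmod x \<le> 3/20 \<Longrightarrow> cmod u \<le> 1 \<Longrightarrow>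
                 cmod (wk k x u) \<le> 123/100 * cmod (u - 1) * cmod x * (1/2) ^ k"
    and x: "cmod x \<le> 3/20" and u: "cmod u \<le> 1"
  shows "norm (wk k (x ^ Suc i) (u ^ Suc i) / of_nat (Suc i)) \<le>
           (123/100 * cmod (u - 1) * (1/2) ^ k) * cmod x ^ Suc i"
proof -
  have "cmod x ^ Suc i \<le> cmod x"
    using x by (simp add: mult_left_le power_le_one)
  hence "cmod (x ^ Suc i) \<le> 3/20"
    using x by (simp only: norm_power)
  moreover have "cmod (u ^ Suc i) \<le> 1"
    using u unfolding norm_power by (rule power_le_one[OF norm_ge_zero])
  ultimately have "cmod (wk k (x ^ Suc i) (u ^ Suc i)) \<le>
      123/100 * cmod (u ^ Suc i - 1) * cmod (x ^ Suc i) * (1/2) ^ k"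
    by (rule IH)
  also have "\<dots> \<le> 123/100 * (real (Suc i) * cmod (u - 1)) * cmod x ^ Suc i * (1/2) ^ k"
    using norm_power_sub_one_le[OF u, of "Suc i"]
    unfolding norm_power by (intro mult_right_mono mult_left_mono) auto
  finally show ?thesis
    by (simp add: norm_divide field_simps del: of_nat_Suc)
qed

text \<open>With \<open>r = |x| \<le> 3/20\<close> and \<open>A = 1.23 |u - 1| 2\<^sup>-\<^sup>k\<close>, the exponent \<open>D\<close> of \<open>wk_Suc\<close>
  satisfies \<open>|D| \<le> A r/(1 - r) \<le> 3A/17 \<le> 1/2\<close>, so
  \<open>|y(x)(e\<^sup>D - 1)| \<le> 1.23 r \<cdot> 3/2 \<cdot> 3A/17 \<le> A r/2\<close>.\<close>

lemma norm_wk_Suc_le: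
  assumes IH: "\<And>x u. cmod x \<le> 3/20 \<Longrightarrow> cmod u \<le> 1 \<Longrightarrow>
                 cmod (wk k x u) \<le> 123/100 * cmod (u - 1) * cmod x * (1/2) ^ k"
    and x: "cmod x \<le> 3/20" and u: "cmod u \<le> 1"
  shows "cmod (wk (Suc k) x u) \<le> 123/100 * cmod (u - 1) * cmod x * (1/2) ^ Suc k"
proof -
  let ?r = "cmod x"
  define A where "A = 123/100 * cmod (u - 1) * (1/2::real) ^ k"
  define D where "D = (\<Sum>i. wk k (x ^ Suc i) (u ^ Suc i) / of_nat (Suc i))"
  note terms = norm_wk_series_term_le[OF IH x u, folded A_def]
  have r: "0 \<le> ?r" "?r < 1"
    using x by auto
  have "cmod D \<le> A * (?r / (1 - ?r))"
    unfolding D_def using terms r by (rule norm_suminf_le_geometric)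
  also have "\<dots> \<le> A * (3/17)"
    using x by (intro mult_left_mono) (auto simp: A_def field_simps)
  finally have D: "cmod D \<le> A * (3/17)" .
  have "cmod (u - 1) * (1/2) ^ k \<le> 2 * 1"
    using norm_triangle_ineq4[of u 1] u by (intro mult_mono) (auto simp: power_le_one)
  hence "cmod D \<le> 1/2"
    using D by (simp add: A_def)
  have "wk (Suc k) x u = ygf x * (exp D - 1)"
    unfolding D_def
  proof (rule wk_Suc)
    show "cmod x < rho"
      using x rho_ge by simp
    show "summable (\<lambda>i. wk k (x ^ Suc i) (u ^ Suc i) / of_nat (Suc i))"
      using terms r by (rule summable_if_norm_le_geometric)
  qed
  hence "cmod (wk (Suc k) x u) = cmod (ygf x) * cmod (exp D - 1)"
    by (simp add: norm_mult)
  also have "\<dots> \<le> (123/100 * ?r) * (3/2 * (A * (3/17)))"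
    using norm_ygf_le[OF x] norm_exp_bounds(2)[OF \<open>cmod D \<le> 1/2\<close>] D
    by (intro mult_mono) auto
  also have "\<dots> \<le> A * ?r * (1/2)"
    using r by (simp add: A_def mult_right_mono)
  finally show ?thesis
    by (simp add: A_def algebra_simps)
qed

lemma norm_wk_le:
  "cmod x \<le> 3/20 \<Longrightarrow> cmod u \<le> 1 \<Longrightarrow> cmod (wk k x u) \<le> 123/100 * cmod (u - 1) * cmod x * (1/2) ^ k"
proof (induction k arbitrary: x u)
  case 0
  have "cmod (wk 0 x u) = cmod (u - 1) * cmod (ygf x)"
    by (simp add: wk_0 norm_mult)
  also have "\<dots> \<le> cmod (u - 1) * (123/100 * cmod x)"
    using norm_ygf_le[OF "0.prems"(1)] by (intro mult_left_mono) auto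
  finally show ?case
    by simp
next
  case (Suc k)
  thus ?case
    by (intro norm_wk_Suc_le)
qed

theorem mainTheorem9:
  shows "\<exists>\<epsilon>>0. \<exists>L C. 0 < L \<and> L < 1 \<and> C > (0::real) \<and>
    (\<forall>(x::complex) (u::complex) (k::nat). cmod x \<le> rho ^ 2 + \<epsilon> \<longrightarrow> cmod u \<le> 1 \<longrightarrow>
       cmod (wk k x u) \<le> C * cmod (u - 1) * cmod x * L ^ k)"
proof (intro exI conjI allI impI)
  show "0 < 3/20 - rho\<^sup>2"
    using rho_squared_less by simp
  show "0 < (1/2::real)" "(1/2::real) < 1" "(0::real) < 123/100"
    by simp_all
  fix x u :: complex and k :: nat
  assume "cmod x \<le> rho\<^sup>2 + (3/20 - rho\<^sup>2)" "cmod u \<le> 1"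
  thus "cmod (wk k x u) \<le> 123/100 * cmod (u - 1) * cmod x * (1/2) ^ k"
    by (intro norm_wk_le) simp_all
qed

end
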